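(* Let $1\leqslant k\leqslant n$, and let $P_{n,k}$ be the subgraph of $P_n$ induced by all permutations $\pi$ with $\pi_1\in\{1,\ldots,k\}$. Then: (a) the map $f_{n,k}$ from the vertices of $P_{n,k}$ to those of $P_k$, obtained by deleting from $\pi$ all entries not in $\{1,\ldots,k\}$, is a graph homomorphism $P_{n,k}\to P_k$; (b) $\chi(P_{n,k})=\chi(P_k)$.
   Context: For $n\geqslant 1$, the Pancake graph $P_n$ is the Cayley graph on the symmetric group $\mathrm{Sym}_n$, with permutations written in one-line notation $\pi=[\pi_1\pi_2\ldots\pi_n]$. Its generating set consists of the prefix-reversals $r_i$, $2\leqslant i\leqslant n$. Multiplying $\pi$ on the right by $r_i$ reverses the first $i$ entries: $\pi r_i=[\pi_i\pi_{i-1}\ldots\pi_1\pi_{i+1}\ldots\pi_n]$. Two vertices $\pi,\sigma$ are adjacent iff $\sigma=\pi r_i$ for some $2\leqslant i\leqslant n$. $\chi$ denotes the chromatic number. *)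

theory Defs
  imports "HOL-Combinatorics.Multiset_Permutations"
begin

definition prefix_rev :: "nat \<Rightarrow> 'a list \<Rightarrow> 'a list" where
  "prefix_rev i xs = rev (take i xs) @ drop i xs"

definition pancake_vertices :: "nat \<Rightarrow> nat list set" where
  "pancake_vertices n = permutations_of_set {1..n}"

definition pancake_adj :: "nat \<Rightarrow> nat list \<Rightarrow> nat list \<Rightarrow> bool" where
  "pancake_adj n \<pi> \<sigma> \<longleftrightarrow> (\<exists>i\<in>{2..n}. \<sigma> = prefix_rev i \<pi>)"

text \<open>Vertex set of P_{n,k}: permutations whose first entry lies in {1..k}
  (induced subgraph: adjacency is pancake_adj n restricted to this set).\<close>
definition pancake_sub_vertices :: "nat \<Rightarrow> nat \<Rightarrow> nat list set" where
  "pancake_sub_vertices n k = {\<pi> \<in> pancake_vertices n. hd \<pi> \<in> {1..k}}"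

definition f_map :: "nat \<Rightarrow> nat list \<Rightarrow> nat list" where
  "f_map k \<pi> = filter (\<lambda>x. x \<in> {1..k}) \<pi>"

definition graph_hom ::
  "'a set \<Rightarrow> ('a \<Rightarrow> 'a \<Rightarrow> bool) \<Rightarrow> 'b set \<Rightarrow> ('b \<Rightarrow> 'b \<Rightarrow> bool) \<Rightarrow> ('a \<Rightarrow> 'b) \<Rightarrow> bool" where
  "graph_hom V E W F f \<longleftrightarrow>
     (\<forall>v\<in>V. f v \<in> W) \<and> (\<forall>u\<in>V. \<forall>v\<in>V. E u v \<longrightarrow> F (f u) (f v))"

definition proper_colouring :: "'a set \<Rightarrow> ('a \<Rightarrow> 'a \<Rightarrow> bool) \<Rightarrow> ('a \<Rightarrow> nat) \<Rightarrow> bool" where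
  "proper_colouring V E c \<longleftrightarrow> (\<forall>u\<in>V. \<forall>v\<in>V. E u v \<longrightarrow> c u \<noteq> c v)"

definition chromatic_number :: "'a set \<Rightarrow> ('a \<Rightarrow> 'a \<Rightarrow> bool) \<Rightarrow> nat" where
  "chromatic_number V E = (LEAST m. \<exists>c. (\<forall>v\<in>V. c v < m) \<and> proper_colouring V E c)"

end

theory Submission
  imports Defs
begin

text \<open>Deleting the entries outside \<open>{1..k}\<close> turns the reversal of the first \<open>i\<close> entries
  into the reversal of the first \<open>j\<close> surviving entries, where \<open>j\<close> counts the survivors among
  the first \<open>i\<close>. For an edge of \<open>P\<^sub>n\<^sub>,\<^sub>k\<close> both the old first entry and the new one (the \<open>i\<close>-th)
  survive, so \<open>j \<ge> 2\<close> and the image is an edge of \<open>P\<^sub>k\<close>. Conversely, appending \<open>k+1, \<dots>, n\<close>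
  embeds \<open>P\<^sub>k\<close> into \<open>P\<^sub>n\<^sub>,\<^sub>k\<close>. Homomorphisms in both directions force equal chromatic numbers.\<close>

definition colourable :: "'a set \<Rightarrow> ('a \<Rightarrow> 'a \<Rightarrow> bool) \<Rightarrow> bool" where
  "colourable V E \<longleftrightarrow> (\<exists>m c. (\<forall>v\<in>V. c v < m) \<and> proper_colouring V E c)"

lemma finite_irreflexive_colourable:
  assumes "finite V" and irrefl: "\<And>v. v \<in> V \<Longrightarrow> \<not> E v v"
  shows "colourable V E"
proof -
  obtain c :: "_ \<Rightarrow> nat" and m where c: "c ` V = {i. i < m}" "inj_on c V"
    using finite_imp_inj_to_nat_seg[OF \<open>finite V\<close>] by blast
  have "proper_colouring V E c"
    unfolding proper_colouring_def using c(2) irrefl by (metis inj_onD)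
  with c(1) show ?thesis unfolding colourable_def by blast
qed

lemma proper_colouring_comp_graph_hom:
  assumes "graph_hom V E W F f" and "proper_colouring W F c"
  shows "proper_colouring V E (c \<circ> f)"
  using assms unfolding graph_hom_def proper_colouring_def by auto

lemma chromatic_number_le_graph_hom:
  assumes hom: "graph_hom V E W F f" and "colourable W F"
  shows "chromatic_number V E \<le> chromatic_number W F"
proof -
  let ?P = "\<lambda>m. \<exists>c. (\<forall>v\<in>W. c v < m) \<and> proper_colouring W F c"
  obtain m where "?P m"
    using \<open>colourable W F\<close> unfolding colourable_def by blast
  then have "?P (Least ?P)" by (rule LeastI)
  then obtain c where c: "\<forall>v\<in>W. c v < Least ?P" "proper_colouring W F c" by blast
  have "\<forall>v\<in>V. (c \<circ> f) v < Least ?P"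
    using c(1) hom unfolding graph_hom_def by auto
  moreover have "proper_colouring V E (c \<circ> f)"
    using proper_colouring_comp_graph_hom[OF hom c(2)] .
  ultimately show ?thesis
    unfolding chromatic_number_def by (blast intro: Least_le)
qed

lemma chromatic_number_eq_graph_homs:
  assumes "graph_hom V E W F f" "colourable W F"
    and "graph_hom W F V E g" "colourable V E"
  shows "chromatic_number V E = chromatic_number W F"
  using chromatic_number_le_graph_hom[OF assms(1,2)] chromatic_number_le_graph_hom[OF assms(3,4)]
  by simp

lemma filter_prefix_rev:
  "filter P (prefix_rev i xs) = prefix_rev (length (filter P (take i xs))) (filter P xs)"
proof -
  have split: "filter P xs = filter P (take i xs) @ filter P (drop i xs)"
    by (metis append_take_drop_id filter_append)
  show ?thesis
    unfolding split by (simp add: prefix_rev_def rev_filter)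
qed

lemma prefix_rev_append:
  "i \<le> length xs \<Longrightarrow> prefix_rev i (xs @ ys) = prefix_rev i xs @ ys"
  by (simp add: prefix_rev_def)

lemma hd_prefix_rev:
  assumes "1 \<le> i" "i \<le> length xs"
  shows "hd (prefix_rev i xs) = xs ! (i - 1)"
  using assms by (cases xs) (auto simp: prefix_rev_def hd_append rev_nth hd_conv_nth)

lemma two_le_length_filter_take:
  assumes "distinct xs" "2 \<le> i" "i \<le> length xs" "P (xs ! 0)" "P (xs ! (i - 1))"
  shows "2 \<le> length (filter P (take i xs))"
proof -
  have "xs ! 0 = xs ! (i - 1) \<longleftrightarrow> 0 = i - 1"
    using assms(1-3) by (intro nth_eq_iff_index_eq) auto
  then have ne: "xs ! 0 \<noteq> xs ! (i - 1)"
    using assms(2) by simp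
  have "xs ! 0 \<in> set (take i xs)"
    using assms(2,3) by (auto simp: in_set_conv_nth intro!: exI[of _ 0])
  moreover have "xs ! (i - 1) \<in> set (take i xs)"
    using assms(2,3) by (auto simp: in_set_conv_nth intro!: exI[of _ "i - 1"])
  ultimately have "{xs ! 0, xs ! (i - 1)} \<subseteq> set (filter P (take i xs))"
    using assms(4,5) by auto
  then have "2 \<le> card (set (filter P (take i xs)))"
    using ne by (metis card_2_iff card_mono finite_set)
  then show ?thesis using card_length order_trans by blast
qed

lemma pancake_vertices_iff:
  "\<pi> \<in> pancake_vertices n \<longleftrightarrow> set \<pi> = {1..n} \<and> distinct \<pi>"
  by (simp add: pancake_vertices_def permutations_of_set_def)

lemma length_pancake_vertex: "\<pi> \<in> pancake_vertices n \<Longrightarrow> length \<pi> = n"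
  by (metis card_atLeastAtMost diff_Suc_1 distinct_card pancake_vertices_iff)

lemma pancake_adj_irrefl:
  assumes "\<pi> \<in> pancake_vertices n"
  shows "\<not> pancake_adj n \<pi> \<pi>"
proof
  assume "pancake_adj n \<pi> \<pi>"
  then obtain i where i: "2 \<le> i" "i \<le> n" "\<pi> = prefix_rev i \<pi>"
    by (auto simp: pancake_adj_def)
  have len: "length \<pi> = n" "distinct \<pi>"
    using assms length_pancake_vertex pancake_vertices_iff by blast+
  have "\<pi> \<noteq> []"
    using i len by auto
  then have "\<pi> ! 0 = \<pi> ! (i - 1)"
    using hd_prefix_rev[of i \<pi>] i len by (simp add: hd_conv_nth flip: i(3))
  moreover have "\<pi> ! 0 = \<pi> ! (i - 1) \<longleftrightarrow> 0 = i - 1"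
    using i len by (intro nth_eq_iff_index_eq) auto
  ultimately show False
    using i(1) by simp
qed

lemma colourable_pancake:
  assumes "V \<subseteq> pancake_vertices n"
  shows "colourable V (pancake_adj n)"
proof (rule finite_irreflexive_colourable)
  show "finite V"
    using assms by (rule finite_subset) (simp add: pancake_vertices_def)
qed (use assms pancake_adj_irrefl in blast)

lemma f_map_in_pancake_vertices:
  "\<pi> \<in> pancake_vertices n \<Longrightarrow> k \<le> n \<Longrightarrow> f_map k \<pi> \<in> pancake_vertices k"
  by (auto simp: pancake_vertices_iff f_map_def)

lemma pancake_adj_f_map:
  assumes u: "u \<in> pancake_sub_vertices n k" and v: "v \<in> pancake_sub_vertices n k"
    and "k \<le> n" and "pancake_adj n u v"
  shows "pancake_adj k (f_map k u) (f_map k v)"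
proof -
  obtain i where i: "2 \<le> i" "i \<le> n" "v = prefix_rev i u"
    using \<open>pancake_adj n u v\<close> by (auto simp: pancake_adj_def)
  let ?P = "\<lambda>x. x \<in> {1..k}"
  define j where "j = length (filter ?P (take i u))"
  have u_vertex: "u \<in> pancake_vertices n" and hd_u: "hd u \<in> {1..k}" and hd_v: "hd v \<in> {1..k}"
    using u v by (auto simp: pancake_sub_vertices_def)
  have len_u: "length u = n" and "distinct u"
    using u_vertex length_pancake_vertex pancake_vertices_iff by blast+
  have "hd u = u ! 0"
    using i len_u by (cases u) auto
  moreover have "hd v = u ! (i - 1)"
    using i len_u hd_prefix_rev[of i u] by simp
  ultimately have "2 \<le> j"
    unfolding j_def using two_le_length_filter_take[OF \<open>distinct u\<close>] i len_u hd_u hd_v by simp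
  moreover have "j \<le> k"
  proof -
    have "j \<le> length (filter ?P u)"
      unfolding j_def by (metis append_take_drop_id filter_append le_add1 length_append)
    also have "\<dots> = k"
      using length_pancake_vertex[OF f_map_in_pancake_vertices[OF u_vertex \<open>k \<le> n\<close>]]
      by (simp add: f_map_def)
    finally show ?thesis .
  qed
  moreover have "f_map k v = prefix_rev j (f_map k u)"
    unfolding f_map_def j_def i(3) by (rule filter_prefix_rev)
  ultimately show ?thesis
    unfolding pancake_adj_def by auto
qed

lemma graph_hom_f_map:
  assumes "k \<le> n"
  shows "graph_hom (pancake_sub_vertices n k) (pancake_adj n)
           (pancake_vertices k) (pancake_adj k) (f_map k)"
  unfolding graph_hom_def
  using assms f_map_in_pancake_vertices pancake_adj_f_map
  by (fastforce simp: pancake_sub_vertices_def)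

lemma graph_hom_append_tail:
  assumes "1 \<le> k" "k \<le> n"
  shows "graph_hom (pancake_vertices k) (pancake_adj k)
           (pancake_sub_vertices n k) (pancake_adj n) (\<lambda>\<pi>. \<pi> @ [Suc k..<Suc n])"
  unfolding graph_hom_def
proof (intro conjI ballI impI)
  fix \<pi> assume "\<pi> \<in> pancake_vertices k"
  then have "set \<pi> = {1..k}" "distinct \<pi>"
    by (auto simp: pancake_vertices_iff)
  moreover from this have "\<pi> \<noteq> []" using assms by auto
  ultimately show "\<pi> @ [Suc k..<Suc n] \<in> pancake_sub_vertices n k"
    using assms by (auto simp: pancake_sub_vertices_def pancake_vertices_iff)
next
  fix \<pi> \<sigma> assume "\<pi> \<in> pancake_vertices k" "pancake_adj k \<pi> \<sigma>"
  then obtain i where i: "i \<in> {2..k}" "\<sigma> = prefix_rev i \<pi>" "i \<le> length \<pi>"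
    by (auto simp: pancake_adj_def length_pancake_vertex)
  then have "\<sigma> @ [Suc k..<Suc n] = prefix_rev i (\<pi> @ [Suc k..<Suc n])"
    by (simp add: prefix_rev_append)
  with i(1) assms show "pancake_adj n (\<pi> @ [Suc k..<Suc n]) (\<sigma> @ [Suc k..<Suc n])"
    unfolding pancake_adj_def by auto
qed

theorem mainTheorem3:
  fixes n k :: nat
  assumes "1 \<le> k" and "k \<le> n"
  shows "graph_hom (pancake_sub_vertices n k) (pancake_adj n)
                   (pancake_vertices k) (pancake_adj k) (f_map k)
       \<and> chromatic_number (pancake_sub_vertices n k) (pancake_adj n)
           = chromatic_number (pancake_vertices k) (pancake_adj k)"
proof
  show hom: "graph_hom (pancake_sub_vertices n k) (pancake_adj n)
               (pancake_vertices k) (pancake_adj k) (f_map k)"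
    using graph_hom_f_map[OF assms(2)] .
  have "pancake_sub_vertices n k \<subseteq> pancake_vertices n"
    by (auto simp: pancake_sub_vertices_def)
  then show "chromatic_number (pancake_sub_vertices n k) (pancake_adj n)
           = chromatic_number (pancake_vertices k) (pancake_adj k)"
    using chromatic_number_eq_graph_homs[OF hom _ graph_hom_append_tail[OF assms]]
      colourable_pancake by blast
qed

end
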